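(* Let $n\ge 1$, let $\mathbf{Q}\in\mathbb{R}^{n\times n}$ be symmetric, $\mathbf{c}\in\mathbb{R}^n$, $\mathbf{v}\in\mathbb{R}^n_+$, $V_c>0$ and $\beta>0$. Let $\mathcal{Z}_b=\{\mathbf{z}\in\mathbb{R}^n:\ \mathbf{v}^T\mathbf{z}\le V_c\}$ and $$P_\beta(\mathbf{z})=\tfrac12\mathbf{z}^T\mathbf{Q}\mathbf{z}+\tfrac12\beta\|\mathbf{z}\circ\mathbf{z}-\mathbf{z}\|^2-\mathbf{c}^T\mathbf{z}.$$ For $\boldsymbol{\zeta}=(\boldsymbol{\sigma},\tau)\in\mathbb{R}^n\times\mathbb{R}$ put $\mathbf{G}(\boldsymbol{\sigma})=\mathbf{Q}+2\,\mathrm{Diag}(\boldsymbol{\sigma})$, $\boldsymbol{\psi}(\boldsymbol{\sigma},\tau)=\mathbf{c}-\tau\mathbf{v}+\boldsymbol{\sigma}$, $$\Xi_\beta(\mathbf{z},\boldsymbol{\sigma},\tau)=\tfrac12\mathbf{z}^T\mathbf{G}(\boldsymbol{\sigma})\mathbf{z}-\tfrac12\beta^{-1}\|\boldsymbol{\sigma}\|^2-\mathbf{z}^T\boldsymbol{\psi}(\boldsymbol{\sigma},\tau)-\tau V_c,$$ $\mathcal{S}_a^+=\{(\boldsymbol{\sigma},\tau)\in\mathbb{R}^{n+1}:\ \mathbf{G}(\boldsymbol{\sigma})\succ 0,\ \tau>0\}$, and for $\boldsymbol{\zeta}\in\mathcal{S}_a^+$ $$P^d_\beta(\boldsymbol{\zeta})=-\tfrac12\boldsymbol{\psi}(\boldsymbol{\zeta})^T\mathbf{G}(\boldsymbol{\sigma})^{-1}\boldsymbol{\psi}(\boldsymbol{\zeta})-\tfrac12\beta^{-1}\|\boldsymbol{\sigma}\|^2-\tau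 V_c.$$ If $(\mathbf{z}_\beta,\boldsymbol{\zeta}_\beta)\in\mathbb{R}^n\times\mathcal{S}_a^+$ is a KKT point of $\Xi_\beta$, then $\mathbf{z}_\beta$ is a global minimizer of $P_\beta$ over $\mathcal{Z}_b$, $\boldsymbol{\zeta}_\beta$ is a maximizer of $P^d_\beta$ over $\mathcal{S}_a^+$, and $$P_\beta(\mathbf{z}_\beta)=\min_{\mathbf{z}\in\mathcal{Z}_b}P_\beta(\mathbf{z})=\Xi_\beta(\mathbf{z}_\beta,\boldsymbol{\zeta}_\beta)=\max_{\boldsymbol{\zeta}\in\mathcal{S}_a^+}P^d_\beta(\boldsymbol{\zeta})=P^d_\beta(\boldsymbol{\zeta}_\beta).$$
   Context: $\mathbf{z}\circ\mathbf{z}$ denotes the componentwise square $\{z_i^2\}$, and $\mathrm{Diag}(\boldsymbol{\sigma})$ is the diagonal matrix with diagonal $\boldsymbol{\sigma}$. A KKT point $(\mathbf{z},\boldsymbol{\sigma},\tau)$ of $\Xi_\beta$ means: $\nabla_{\mathbf{z}}\Xi_\beta=0$, $\nabla_{\boldsymbol{\sigma}}\Xi_\beta=0$, and $\mathbf{v}^T\mathbf{z}\le V_c$, $\tau\ge 0$, $\tau(\mathbf{v}^T\mathbf{z}-V_c)=0$. This is the penalty relaxation of the quadratic knapsack problem $\min\{\tfrac12\mathbf{z}^T\mathbf{Q}\mathbf{z}-\mathbf{c}^T\mathbf{z}:\ \mathbf{z}\in\{0,1\}^n,\ \mathbf{v}^T\mathbf{z}\le V_c\}$. *)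

theory Defs
  imports "HOL-Analysis.Analysis"
begin

definition csq :: "real^'n \<Rightarrow> real^'n" where
  "csq z = (\<chi> i. (z$i)^2)"

definition Diag :: "real^'n \<Rightarrow> real^'n^'n" where
  "Diag s = (\<chi> i j. if i = j then s$i else 0)"

definition posdef :: "real^'n^'n \<Rightarrow> bool" where
  "posdef G \<longleftrightarrow> (\<forall>x. x \<noteq> 0 \<longrightarrow> x \<bullet> (G *v x) > 0)"

definition Pbeta :: "real^'n^'n \<Rightarrow> real^'n \<Rightarrow> real \<Rightarrow> real^'n \<Rightarrow> real" where
  "Pbeta Q c \<beta> z = (1/2) * (z \<bullet> (Q *v z)) + (1/2) * \<beta> * (norm (csq z - z))^2 - c \<bullet> z"

definition Gmat :: "real^'n^'n \<Rightarrow> real^'n \<Rightarrow> real^'n^'n" where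
  "Gmat Q s = Q + 2 *\<^sub>R Diag s"

definition psi :: "real^'n \<Rightarrow> real^'n \<Rightarrow> real^'n \<Rightarrow> real \<Rightarrow> real^'n" where
  "psi c v s t = c - t *\<^sub>R v + s"

definition Xi :: "real^'n^'n \<Rightarrow> real^'n \<Rightarrow> real^'n \<Rightarrow> real \<Rightarrow> real \<Rightarrow>
                   real^'n \<Rightarrow> real^'n \<Rightarrow> real \<Rightarrow> real" where
  "Xi Q c v Vc \<beta> z s t =
     (1/2) * (z \<bullet> (Gmat Q s *v z)) - (1/2) * (1/\<beta>) * (norm s)^2
     - z \<bullet> psi c v s t - t * Vc"

definition Sa_plus :: "real^'n^'n \<Rightarrow> ((real^'n) \<times> real) set" where
  "Sa_plus Q = {(s, t). posdef (Gmat Q s) \<and> t > 0}"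

definition Pdual :: "real^'n^'n \<Rightarrow> real^'n \<Rightarrow> real^'n \<Rightarrow> real \<Rightarrow> real \<Rightarrow>
                     (real^'n) \<times> real \<Rightarrow> real" where
  "Pdual Q c v Vc \<beta> \<zeta> = (case \<zeta> of (s, t) \<Rightarrow>
     - (1/2) * (psi c v s t \<bullet> (matrix_inv (Gmat Q s) *v psi c v s t))
     - (1/2) * (1/\<beta>) * (norm s)^2 - t * Vc)"

definition KKT :: "real^'n^'n \<Rightarrow> real^'n \<Rightarrow> real^'n \<Rightarrow> real \<Rightarrow> real \<Rightarrow>
                   real^'n \<Rightarrow> real^'n \<Rightarrow> real \<Rightarrow> bool" where
  "KKT Q c v Vc \<beta> z s t \<longleftrightarrow>
     ((\<lambda>z'. Xi Q c v Vc \<beta> z' s t) has_derivative (\<lambda>h. 0)) (at z) \<and>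
     ((\<lambda>s'. Xi Q c v Vc \<beta> z s' t) has_derivative (\<lambda>h. 0)) (at s) \<and>
     v \<bullet> z \<le> Vc \<and> t \<ge> 0 \<and> t * (v \<bullet> z - Vc) = 0"

end

theory Submission
  imports Defs
begin

text \<open>
  \<open>\<Xi>\<^sub>\<beta>\<close> is a Lagrangian of \<open>P\<^sub>\<beta>\<close>: writing \<open>w = z \<circ> z - z\<close>, the quadratic penalty is replaced by
  \<open>\<sigma>\<^sup>T w - \<parallel>\<sigma>\<parallel>\<^sup>2/(2\<beta>)\<close>, whose maximum over \<open>\<sigma>\<close> is \<open>\<beta>\<parallel>w\<parallel>\<^sup>2/2\<close>, attained at \<open>\<sigma> = \<beta> w\<close>, and the
  knapsack constraint by \<open>\<tau>(v\<^sup>T z - V\<^sub>c)\<close>. Hence \<open>\<Xi>\<^sub>\<beta>(z,\<zeta>) \<le> P\<^sub>\<beta>(z)\<close> for feasible \<open>z\<close> and \<open>\<tau> \<ge> 0\<close>,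
  with equality at a KKT point. On the other hand \<open>\<Xi>\<^sub>\<beta>(\<cdot>,\<zeta>)\<close> is a convex quadratic when
  \<open>G(\<sigma>) \<succ> 0\<close>, whose minimum value is \<open>P\<^sup>d\<^sub>\<beta>(\<zeta>)\<close> and which the KKT point \<open>z\<^sub>\<beta>\<close> minimises for
  \<open>\<zeta> = \<zeta>\<^sub>\<beta>\<close>. Chaining these two inequalities in both directions gives the saddle point
  statement.
\<close>

lemma matrix_inv_right:
  fixes A :: "'a::field^'n^'n"
  assumes "invertible A"
  shows "A ** matrix_inv A = mat 1"
  using assms unfolding invertible_def matrix_inv_def by (rule someI_ex[THEN conjunct1])

lemma posdef_imp_ker_trivial:
  assumes "posdef G" "G *v x = 0"
  shows "x = 0"
  using assms unfolding posdef_def by (metis inner_zero_right less_irrefl)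

lemma posdef_imp_invertible: "posdef G \<Longrightarrow> invertible G"
  using posdef_imp_ker_trivial invertible_left_inverse matrix_left_invertible_ker by metis

lemma posdef_matrix_inv_solves:
  assumes "posdef G"
  shows "G *v (matrix_inv G *v p) = p"
  using matrix_inv_right[OF posdef_imp_invertible[OF assms]]
  by (simp add: matrix_vector_mul_assoc)

lemma posdef_matrix_inv_unique:
  assumes "posdef G" "G *v y = p"
  shows "matrix_inv G *v p = y"
proof -
  have "G *v (matrix_inv G *v p - y) = 0"
    using posdef_matrix_inv_solves[OF assms(1)] assms(2) by (simp add: matrix_vector_mult_diff_distrib)
  then have "matrix_inv G *v p - y = 0" by (rule posdef_imp_ker_trivial[OF assms(1)])
  then show ?thesis by simp
qed

lemma posdef_imp_psd: "posdef G \<Longrightarrow> 0 \<le> x \<bullet> (G *v x)"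
  unfolding posdef_def by (cases "x = 0") (auto intro: less_imp_le)

lemma symmetric_matrix_inner:
  fixes G :: "real^'n^'n"
  assumes "transpose G = G"
  shows "y \<bullet> (G *v z) = z \<bullet> (G *v y)"
  by (metis assms dot_lmul_matrix inner_commute transpose_matrix_vector)

lemma psd_quadratic_min_at_stationary:
  fixes G :: "real^'n^'n"
  assumes "transpose G = G" "\<And>x. 0 \<le> x \<bullet> (G *v x)" "G *v y = p"
  shows "y \<bullet> (G *v y) / 2 - y \<bullet> p \<le> z \<bullet> (G *v z) / 2 - z \<bullet> p"
proof -
  have "0 \<le> (z - y) \<bullet> (G *v (z - y))" using assms(2) .
  also have "\<dots> = z \<bullet> (G *v z) - 2 * (z \<bullet> (G *v y)) + y \<bullet> (G *v y)"
    using symmetric_matrix_inner[OF assms(1), of y z]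
    by (simp add: matrix_vector_mult_diff_distrib inner_diff_left inner_diff_right)
  finally show ?thesis using assms(3) by (simp add: inner_commute)
qed

lemma has_derivative_symmetric_quadratic_form:
  fixes G :: "real^'n^'n"
  assumes "transpose G = G"
  shows "((\<lambda>x. x \<bullet> (G *v x)) has_derivative (\<lambda>h. 2 * (h \<bullet> (G *v x)))) (at x)"
proof -
  have "((\<lambda>x. x \<bullet> (G *v x)) has_derivative (\<lambda>h. h \<bullet> (G *v x) + x \<bullet> (G *v h))) (at x)"
    by (rule derivative_eq_intros refl has_derivative_ident
        bounded_linear.has_derivative[OF matrix_vector_mul_bounded_linear])+
      (simp add: fun_eq_iff add.commute)
  then show ?thesis using symmetric_matrix_inner[OF assms, of x] by simp
qed

lemma has_derivative_inner_zero:
  fixes f :: "'a::real_inner \<Rightarrow> real"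
  assumes "(f has_derivative (\<lambda>h. h \<bullet> a)) (at x)" "(f has_derivative (\<lambda>h. 0)) (at x)"
  shows "a = 0"
proof -
  have "(\<lambda>h. h \<bullet> a) = (\<lambda>h. 0)" using has_derivative_unique[OF assms] .
  then have "a \<bullet> a = 0" by metis
  then show ?thesis by simp
qed

lemma inner_minus_scaled_sq_le:
  fixes s w :: "'a::real_inner"
  assumes "\<beta> > 0"
  shows "s \<bullet> w - (s \<bullet> s) / (2 * \<beta>) \<le> \<beta> / 2 * (w \<bullet> w)"
proof -
  have "0 \<le> (s - \<beta> *\<^sub>R w) \<bullet> (s - \<beta> *\<^sub>R w) / (2 * \<beta>)" using assms by simp
  also have "\<dots> = \<beta> / 2 * (w \<bullet> w) - (s \<bullet> w - (s \<bullet> s) / (2 * \<beta>))"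
    using assms by (simp add: inner_diff_left inner_diff_right inner_commute field_simps power2_eq_square)
  finally show ?thesis by simp
qed

lemma Diag_mult_vector: "Diag s *v z = (\<chi> i. s $ i * z $ i)"
  unfolding Diag_def matrix_vector_mult_def
  by (simp add: vec_eq_iff if_distrib[where f="\<lambda>x. x * _"] cong: if_cong)

lemma quadratic_Diag: "z \<bullet> (Diag s *v z) = s \<bullet> csq z"
  unfolding Diag_mult_vector csq_def inner_vec_def by (simp add: power2_eq_square mult_ac)

lemma Xi_Lagrangian_form:
  "Xi Q c v Vc \<beta> z s t = z \<bullet> (Q *v z) / 2 - c \<bullet> z
     + (s \<bullet> (csq z - z) - (s \<bullet> s) / (2 * \<beta>)) + t * (v \<bullet> z - Vc)"
  unfolding Xi_def Gmat_def psi_def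
  by (simp add: matrix_vector_mult_add_rdistrib scaleR_matrix_vector_assoc[symmetric] quadratic_Diag
      inner_add_right inner_diff_right inner_diff_left power2_norm_eq_inner algebra_simps inner_commute)

lemma Pbeta_eq: "Pbeta Q c \<beta> z = z \<bullet> (Q *v z) / 2 - c \<bullet> z + \<beta> / 2 * ((csq z - z) \<bullet> (csq z - z))"
  unfolding Pbeta_def by (simp add: power2_norm_eq_inner)

lemma Xi_le_Pbeta:
  assumes "\<beta> > 0" "t \<ge> 0" "v \<bullet> z \<le> Vc"
  shows "Xi Q c v Vc \<beta> z s t \<le> Pbeta Q c \<beta> z"
proof -
  have "t * (v \<bullet> z - Vc) \<le> 0" using assms(2,3) by (simp add: mult_nonneg_nonpos)
  then show ?thesis
    unfolding Xi_Lagrangian_form Pbeta_eq using inner_minus_scaled_sq_le[OF assms(1), of s "csq z - z"] by linarith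
qed

lemma Xi_eq_Pbeta:
  assumes "\<beta> > 0" "s = \<beta> *\<^sub>R (csq z - z)" "t * (v \<bullet> z - Vc) = 0"
  shows "Xi Q c v Vc \<beta> z s t = Pbeta Q c \<beta> z"
  unfolding Xi_Lagrangian_form Pbeta_eq assms(2,3) using assms(1) by (simp add: power2_eq_square)

lemma Pdual_eq_Xi:
  assumes "posdef (Gmat Q s)"
  shows "Pdual Q c v Vc \<beta> (s, t) = Xi Q c v Vc \<beta> (matrix_inv (Gmat Q s) *v psi c v s t) s t"
  unfolding Pdual_def Xi_def posdef_matrix_inv_solves[OF assms] by (simp add: inner_commute)

lemma Gmat_symmetric: "transpose Q = Q \<Longrightarrow> transpose (Gmat Q s) = Gmat Q s"
  unfolding Gmat_def Diag_def by (auto simp: vec_eq_iff transpose_def)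

lemma Xi_min_at_stationary:
  assumes "transpose Q = Q" "posdef (Gmat Q s)" "Gmat Q s *v y = psi c v s t"
  shows "Xi Q c v Vc \<beta> y s t \<le> Xi Q c v Vc \<beta> z s t"
  using psd_quadratic_min_at_stationary[OF Gmat_symmetric[OF assms(1)] posdef_imp_psd[OF assms(2)] assms(3)]
  unfolding Xi_def by simp

lemma Pdual_le_Xi:
  assumes "transpose Q = Q" "posdef (Gmat Q s)"
  shows "Pdual Q c v Vc \<beta> (s, t) \<le> Xi Q c v Vc \<beta> z s t"
  unfolding Pdual_eq_Xi[OF assms(2)]
  using Xi_min_at_stationary[OF assms posdef_matrix_inv_solves[OF assms(2)]] .

lemma stationary_sigma:
  assumes "\<beta> > 0" "((\<lambda>s'. Xi Q c v Vc \<beta> z s' t) has_derivative (\<lambda>h. 0)) (at s)"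
  shows "s = \<beta> *\<^sub>R (csq z - z)"
proof -
  have "((\<lambda>s'. Xi Q c v Vc \<beta> z s' t) has_derivative
      (\<lambda>h. 0 - 0 + (h \<bullet> (csq z - z) - (s \<bullet> h + h \<bullet> s) / (2 * \<beta>)) + 0)) (at s)"
    unfolding Xi_Lagrangian_form divide_inverse by (intro derivative_intros)
  then have "((\<lambda>s'. Xi Q c v Vc \<beta> z s' t) has_derivative (\<lambda>h. h \<bullet> (csq z - z - s /\<^sub>R \<beta>))) (at s)"
    using assms(1) by (simp add: inner_diff_right inner_commute inverse_eq_divide)
  then have "csq z - z - s /\<^sub>R \<beta> = 0" using has_derivative_inner_zero assms(2) by blast
  then show ?thesis using assms(1) by simp
qed

lemma stationary_z:
  assumes "transpose Q = Q" "((\<lambda>z'. Xi Q c v Vc \<beta> z' s t) has_derivative (\<lambda>h. 0)) (at z)"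
  shows "Gmat Q s *v z = psi c v s t"
proof -
  note quadratic = has_derivative_symmetric_quadratic_form[OF Gmat_symmetric[OF assms(1)]]
  have "((\<lambda>z'. Xi Q c v Vc \<beta> z' s t) has_derivative (\<lambda>h. h \<bullet> (Gmat Q s *v z - psi c v s t))) (at z)"
    unfolding Xi_def
    by (rule derivative_eq_intros quadratic refl | simp)+ (simp add: fun_eq_iff inner_diff_right)
  then show ?thesis using has_derivative_inner_zero assms(2) by fastforce
qed

theorem theorem1:
  fixes Q :: "real^'n^'n" and c v zb sb :: "real^'n" and Vc \<beta> tb :: real
  assumes symQ: "transpose Q = Q"
    and vnn: "\<forall>i. v $ i \<ge> 0"
    and Vc: "Vc > 0" and beta: "\<beta> > 0"
    and Sa: "(sb, tb) \<in> Sa_plus Q"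
    and kkt: "KKT Q c v Vc \<beta> zb sb tb"
  shows "zb \<in> {z. v \<bullet> z \<le> Vc}
    \<and> (\<forall>z \<in> {z. v \<bullet> z \<le> Vc}. Pbeta Q c \<beta> zb \<le> Pbeta Q c \<beta> z)
    \<and> (\<forall>\<zeta> \<in> Sa_plus Q. Pdual Q c v Vc \<beta> \<zeta> \<le> Pdual Q c v Vc \<beta> (sb, tb))
    \<and> Pbeta Q c \<beta> zb = Xi Q c v Vc \<beta> zb sb tb
    \<and> Xi Q c v Vc \<beta> zb sb tb = Pdual Q c v Vc \<beta> (sb, tb)"
proof -
  have pd: "posdef (Gmat Q sb)" and "tb > 0" using Sa unfolding Sa_plus_def by auto
  have feas: "v \<bullet> zb \<le> Vc" and comp: "tb * (v \<bullet> zb - Vc) = 0" using kkt unfolding KKT_def by auto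
  have Gz: "Gmat Q sb *v zb = psi c v sb tb"
    using stationary_z[OF symQ] kkt unfolding KKT_def by blast
  have sb: "sb = \<beta> *\<^sub>R (csq zb - zb)"
    using stationary_sigma[OF beta] kkt unfolding KKT_def by blast
  have primal_eq: "Pbeta Q c \<beta> zb = Xi Q c v Vc \<beta> zb sb tb"
    using Xi_eq_Pbeta[OF beta sb comp] by simp
  have dual_eq: "Xi Q c v Vc \<beta> zb sb tb = Pdual Q c v Vc \<beta> (sb, tb)"
    using Pdual_eq_Xi[OF pd] posdef_matrix_inv_unique[OF pd Gz] by simp
  have "Pbeta Q c \<beta> zb \<le> Pbeta Q c \<beta> z" if "v \<bullet> z \<le> Vc" for z
  proof -
    have "Xi Q c v Vc \<beta> zb sb tb \<le> Xi Q c v Vc \<beta> z sb tb"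
      by (rule Xi_min_at_stationary[OF symQ pd Gz])
    also have "\<dots> \<le> Pbeta Q c \<beta> z"
      using Xi_le_Pbeta[OF beta _ that] \<open>tb > 0\<close> by simp
    finally show ?thesis using primal_eq by simp
  qed
  moreover have "Pdual Q c v Vc \<beta> (s, t) \<le> Pdual Q c v Vc \<beta> (sb, tb)" if "(s, t) \<in> Sa_plus Q" for s t
  proof -
    have "Pdual Q c v Vc \<beta> (s, t) \<le> Xi Q c v Vc \<beta> zb s t"
      using Pdual_le_Xi[OF symQ] that unfolding Sa_plus_def by simp
    also have "\<dots> \<le> Pbeta Q c \<beta> zb"
      using Xi_le_Pbeta[OF beta _ feas] that unfolding Sa_plus_def by simp
    finally show ?thesis using primal_eq dual_eq by simp
  qed
  ultimately show ?thesis using feas primal_eq dual_eq by auto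
qed

end
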